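(* The class of graphs with no cycle with a unique chord is 2-cutset-safe.
   Context: All graphs are finite and simple. A cycle in $G$ is a set of distinct vertices $c_1,\dots,c_k$ with $c_1c_2,\dots,c_{k-1}c_k,c_kc_1\in E(G)$; any other edge of $G$ between two of these vertices is a chord. A graph contains a cycle with a unique chord if it has a cycle with exactly one chord; the class in question consists of graphs in which every cycle has no chord or at least two chords. A connected graph $G$ has a 1-cutset if there is $x$ with $G\setminus\{x\}$ having at least two components. A 2-cutset is a pair $u,v$ with $G\setminus\{u,v\}$ not connected. For a component $C$ of $G\setminus\{u,v\}$, $\operatorname{cl}(C)$ is obtained from the subgraph induced by $C\cup\{u,v\}$ by adding the edge $uv$, and $\operatorname{cl}^*(C)$ from $\operatorname{cl}(C)$ by subdividing $uv$ exactly once. A hereditary class $\mathcal{F}$ is 2-cutset-safe if for every $G\in\mathcal{F}$ with no 1-cutset, every 2-cutset $\{u,v\}$ of $G$ and every component $C$ of $G\setminus\{u,v\}$, either $\operatorname{cl}(C)\in\mathcal{F}$ or $\operatorname{cl}^*(C)\in\mathcal{F}$. *)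

theory Defs
  imports Main
begin

text \<open>Finite simple graphs with vertices from nat (an infinite vertex supply,
so that a fresh vertex for subdividing an edge always exists).
A graph is a pair (V, E) with E a set of 2-element subsets of V.\<close>

type_synonym ugraph = "nat set \<times> nat set set"

definition verts :: "ugraph \<Rightarrow> nat set" where "verts G = fst G"
definition edges :: "ugraph \<Rightarrow> nat set set" where "edges G = snd G"

definition is_graph :: "ugraph \<Rightarrow> bool" where
  "is_graph G \<longleftrightarrow> finite (verts G) \<and>
     (\<forall>e\<in>edges G. \<exists>x y. e = {x, y} \<and> x \<noteq> y \<and> x \<in> verts G \<and> y \<in> verts G)"

definition adj :: "ugraph \<Rightarrow> nat \<Rightarrow> nat \<Rightarrow> bool" where
  "adj G x y \<longleftrightarrow> {x, y} \<in> edges G \<and> x \<noteq> y"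

definition induced :: "ugraph \<Rightarrow> nat set \<Rightarrow> ugraph" where
  "induced G X = (verts G \<inter> X, {e \<in> edges G. e \<subseteq> X})"

definition delete :: "ugraph \<Rightarrow> nat set \<Rightarrow> ugraph" where
  "delete G X = induced G (verts G - X)"

definition is_cycle :: "ugraph \<Rightarrow> nat list \<Rightarrow> bool" where
  "is_cycle G cs \<longleftrightarrow> length cs \<ge> 3 \<and> distinct cs \<and> set cs \<subseteq> verts G \<and>
     (\<forall>i < length cs. adj G (cs ! i) (cs ! ((i + 1) mod length cs)))"

definition cycle_edges :: "nat list \<Rightarrow> nat set set" where
  "cycle_edges cs = {{cs ! i, cs ! ((i + 1) mod length cs)} | i. i < length cs}"

definition chords :: "ugraph \<Rightarrow> nat list \<Rightarrow> nat set set" where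
  "chords G cs = {e \<in> edges G. e \<subseteq> set cs} - cycle_edges cs"

definition has_cycle_unique_chord :: "ugraph \<Rightarrow> bool" where
  "has_cycle_unique_chord G \<longleftrightarrow> (\<exists>cs. is_cycle G cs \<and> card (chords G cs) = 1)"

definition no_unique_chord_class :: "ugraph \<Rightarrow> bool" where
  "no_unique_chord_class G \<longleftrightarrow> is_graph G \<and> \<not> has_cycle_unique_chord G"

definition reach :: "ugraph \<Rightarrow> nat \<Rightarrow> nat \<Rightarrow> bool" where
  "reach G = (\<lambda>x y. x \<in> verts G \<and> y \<in> verts G \<and> adj G x y)\<^sup>*\<^sup>*"

definition components :: "ugraph \<Rightarrow> nat set set" where
  "components G = {{y \<in> verts G. reach G x y} | x. x \<in> verts G}"

definition connected_graph :: "ugraph \<Rightarrow> bool" where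
  "connected_graph G \<longleftrightarrow> card (components G) = 1"

definition has_1cutset :: "ugraph \<Rightarrow> bool" where
  "has_1cutset G \<longleftrightarrow> connected_graph G \<and>
     (\<exists>x \<in> verts G. card (components (delete G {x})) \<ge> 2)"

definition is_2cutset :: "ugraph \<Rightarrow> nat \<Rightarrow> nat \<Rightarrow> bool" where
  "is_2cutset G u v \<longleftrightarrow> u \<in> verts G \<and> v \<in> verts G \<and> u \<noteq> v \<and>
     \<not> connected_graph (delete G {u, v})"

definition cl :: "ugraph \<Rightarrow> nat \<Rightarrow> nat \<Rightarrow> nat set \<Rightarrow> ugraph" where
  "cl G u v C = (let H = induced G (C \<union> {u, v}) in (verts H, edges H \<union> {{u, v}}))"

definition cl_star :: "ugraph \<Rightarrow> nat \<Rightarrow> nat \<Rightarrow> nat set \<Rightarrow> nat \<Rightarrow> ugraph" where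
  "cl_star G u v C w = (let H = induced G (C \<union> {u, v}) in
     (verts H \<union> {w}, (edges H - {{u, v}}) \<union> {{u, w}, {w, v}}))"

definition hereditary :: "(ugraph \<Rightarrow> bool) \<Rightarrow> bool" where
  "hereditary F \<longleftrightarrow> (\<forall>G X. F G \<longrightarrow> F (induced G X))"

definition two_cutset_safe :: "(ugraph \<Rightarrow> bool) \<Rightarrow> bool" where
  "two_cutset_safe F \<longleftrightarrow> hereditary F \<and>
     (\<forall>G u v C. F G \<and> connected_graph G \<and> \<not> has_1cutset G \<and> is_2cutset G u v \<and>
        C \<in> components (delete G {u, v}) \<longrightarrow>
        F (cl G u v C) \<or> (\<exists>w. w \<notin> verts G \<and> F (cl_star G u v C w)))"

end

theory Submission
  imports Defs
begin

(* If uv is an edge of G, then cl(C) is the induced subgraph G[C \<union> {u, v}] and heredity applies.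
   Otherwise take cl*(C) with a fresh subdivision vertex w. A cycle of cl*(C) avoiding w is a cycle
   of G with the same chords. A cycle through w is u w v closed up by a u-v path R inside
   C \<union> {u, v}. As G has no 1-cutset, u and v both have neighbours in any other component C' of
   G - {u, v}, hence are joined by an induced path through C'. Replacing w by this path yields a
   cycle of G with exactly the chords of the original cycle, since the path is induced and no edge
   of G joins C' to C. *)

section \<open>Walks and cycles as vertex lists\<close>

lemma hd_neq_last: "distinct xs \<Longrightarrow> 2 \<le> length xs \<Longrightarrow> hd xs \<noteq> last xs"
  by (cases xs) auto

lemma split_list_two:
  assumes "x \<in> set xs" "y \<in> set xs" "x \<noteq> y"
  shows "\<exists>l1 m l3 x' y'. xs = l1 @ x' # m @ y' # l3 \<and> {x', y'} = {x, y}"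
proof -
  obtain l1 x' r where xs: "xs = l1 @ x' # r" "x' \<in> {x, y}" "\<forall>z\<in>set l1. z \<notin> {x, y}"
    using split_list_first_prop[of xs "\<lambda>z. z \<in> {x, y}"] assms by auto
  define y' where "y' = (if x' = x then y else x)"
  have "y' \<in> set r" using assms xs unfolding y'_def by auto
  then obtain m l3 where "r = m @ y' # l3" by (meson split_list)
  then have "xs = l1 @ x' # m @ y' # l3 \<and> {x', y'} = {x, y}"
    using xs unfolding y'_def by auto
  then show ?thesis by blast
qed

fun walk_edges :: "nat list \<Rightarrow> nat set set" where
  "walk_edges (x # y # zs) = insert {x, y} (walk_edges (y # zs))"
| "walk_edges _ = {}"

lemma walk_edges_Cons: "ys \<noteq> [] \<Longrightarrow> walk_edges (x # ys) = insert {x, hd ys} (walk_edges ys)"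
  by (cases ys) auto

lemma walk_edges_append:
  "xs \<noteq> [] \<Longrightarrow> ys \<noteq> [] \<Longrightarrow> walk_edges (xs @ ys) = walk_edges xs \<union> walk_edges ys \<union> {{last xs, hd ys}}"
  by (induction xs rule: walk_edges.induct) (auto simp: walk_edges_Cons)

lemma walk_edges_append_Cons:
  "walk_edges (xs @ x # ys) = walk_edges (xs @ [x]) \<union> walk_edges (x # ys)"
  by (cases "xs = []") (auto simp: walk_edges_append)

lemma walk_edgesE:
  assumes "e \<in> walk_edges xs"
  obtains x y where "e = {x, y}" "x \<in> set xs" "y \<in> set xs"
  using assms by (induction xs rule: walk_edges.induct) auto

lemma walk_edges_subset_set: "e \<in> walk_edges xs \<Longrightarrow> e \<subseteq> set xs"
  by (auto elim: walk_edgesE)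

lemma walk_edges_remove_loop: "walk_edges (xs @ y # zs) \<subseteq> walk_edges (xs @ y # ys @ y # zs)"
  using walk_edges_append_Cons[of xs y "ys @ y # zs"] walk_edges_append_Cons[of "y # ys" y zs]
    walk_edges_append_Cons[of xs y zs] by auto

lemma walk_edges_shortcut:
  "walk_edges (xs @ x # y # zs) \<subseteq> insert {x, y} (walk_edges (xs @ x # ys @ y # zs))"
  using walk_edges_append_Cons[of xs x "ys @ y # zs"] walk_edges_append_Cons[of "x # ys" y zs]
    walk_edges_append_Cons[of xs x "y # zs"] by auto

lemma walk_edges_conv_nth: "walk_edges xs = {{xs ! i, xs ! Suc i} | i. Suc i < length xs}"
proof (induction xs rule: walk_edges.induct)
  case (1 x y zs)
  have "{{(x # y # zs) ! i, (x # y # zs) ! Suc i} | i. Suc i < length (x # y # zs)}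
      = insert {x, y} {{(y # zs) ! i, (y # zs) ! Suc i} | i. Suc i < length (y # zs)}"
    by (auto simp: less_Suc_eq_0_disj) (metis nth_Cons_0 nth_Cons_Suc, metis nth_Cons_Suc)
  with 1 show ?case by simp
qed auto

lemma cycle_edges_conv_walk_edges:
  assumes "cs \<noteq> []"
  shows "cycle_edges cs = insert {last cs, hd cs} (walk_edges cs)"
proof -
  obtain m where m: "length cs = Suc m" using assms by (cases cs) auto
  have "cycle_edges cs = (\<lambda>i. {cs ! i, cs ! ((i + 1) mod Suc m)}) ` {..<Suc m}"
    unfolding cycle_edges_def m by auto
  also have "\<dots> = insert {cs ! m, cs ! 0} ((\<lambda>i. {cs ! i, cs ! Suc i}) ` {..<m})"
    by (auto simp: lessThan_Suc)
  also have "(\<lambda>i. {cs ! i, cs ! Suc i}) ` {..<m} = walk_edges cs"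
    unfolding walk_edges_conv_nth m by auto
  finally show ?thesis using assms m by (simp add: last_conv_nth hd_conv_nth)
qed

lemma cycle_edges_subset_set: "e \<in> cycle_edges cs \<Longrightarrow> e \<subseteq> set cs"
  by (cases "cs = []") (auto simp: cycle_edges_def cycle_edges_conv_walk_edges elim: walk_edgesE)

lemma cycle_edges_append:
  "xs \<noteq> [] \<Longrightarrow> ys \<noteq> [] \<Longrightarrow> cycle_edges (xs @ ys) = walk_edges xs \<union> walk_edges (last xs # ys @ [hd xs])"
  by (auto simp: cycle_edges_conv_walk_edges walk_edges_append walk_edges_Cons)

lemma cycle_edges_rotate: "cycle_edges (rotate n cs) = cycle_edges cs"
proof -
  have "cycle_edges (rotate1 cs) = cycle_edges cs" for cs
  proof (cases cs)
    case (Cons a xs)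
    show ?thesis
    proof (cases "xs = []")
      case False
      then show ?thesis
        using cycle_edges_append[of xs "[a]"] cycle_edges_conv_walk_edges[of "a # xs"]
        by (auto simp: Cons walk_edges_Cons)
    qed (simp add: Cons)
  qed simp
  then show ?thesis by (induction n) (simp_all add: rotate_Suc)
qed

lemma is_cycle_iff:
  "is_cycle G cs \<longleftrightarrow> 3 \<le> length cs \<and> distinct cs \<and> set cs \<subseteq> verts G \<and> cycle_edges cs \<subseteq> edges G"
proof -
  have "cs ! i \<noteq> cs ! ((i + 1) mod length cs)"
    if "2 \<le> length cs" "distinct cs" "i < length cs" for i
  proof -
    have "(i + 1) mod length cs \<noteq> i"
    proof (cases "Suc i < length cs")
      case False
      then have "Suc i = length cs" using that(3) by simp
      then show ?thesis using that(1) by auto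
    qed simp
    moreover have "(i + 1) mod length cs < length cs"
      using that(3) by (intro mod_less_divisor) linarith
    ultimately show ?thesis using that by (simp add: nth_eq_iff_index_eq)
  qed
  then show ?thesis unfolding is_cycle_def cycle_edges_def adj_def by fastforce
qed

lemma is_cycle_rotate: "is_cycle G (rotate n cs) \<longleftrightarrow> is_cycle G cs"
  by (simp add: is_cycle_iff cycle_edges_rotate)

lemma chords_rotate: "chords G (rotate n cs) = chords G cs"
  by (simp add: chords_def cycle_edges_rotate)

section \<open>Induced paths\<close>

definition induced_path :: "ugraph \<Rightarrow> nat list \<Rightarrow> bool" where
  "induced_path G P \<longleftrightarrow>
     distinct P \<and> walk_edges P \<subseteq> edges G \<and> (\<forall>e\<in>edges G. e \<subseteq> set P \<longrightarrow> e \<in> walk_edges P)"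

lemma walk_to_induced_path:
  assumes "is_graph G" "L \<noteq> []" "walk_edges L \<subseteq> edges G"
  shows "\<exists>P. P \<noteq> [] \<and> hd P = hd L \<and> last P = last L \<and> set P \<subseteq> set L \<and> induced_path G P"
  using assms(2,3)
proof (induction "length L" arbitrary: L rule: less_induct)
  case less
  have shortcut: "\<exists>P. P \<noteq> [] \<and> hd P = hd L \<and> last P = last L \<and> set P \<subseteq> set L \<and> induced_path G P"
    if "length L' < length L" "L' \<noteq> []" "walk_edges L' \<subseteq> edges G"
       "hd L' = hd L" "last L' = last L" "set L' \<subseteq> set L" for L'
    using less.hyps[OF that(1-3)] that(4-6) by (metis subset_trans)
  show ?case
  proof (cases "distinct L")
    case False
    then obtain xs y ys zs where L: "L = xs @ [y] @ ys @ [y] @ zs"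
      using not_distinct_decomp by blast
    show ?thesis
    proof (rule shortcut)
      show "walk_edges (xs @ y # zs) \<subseteq> edges G"
        using less.prems(2) walk_edges_remove_loop[of xs y zs ys] unfolding L by auto
    qed (auto simp: L hd_append)
  next
    case True
    show ?thesis
    proof (cases "\<forall>e\<in>edges G. e \<subseteq> set L \<longrightarrow> e \<in> walk_edges L")
      case True
      with \<open>distinct L\<close> less.prems show ?thesis unfolding induced_path_def by blast
    next
      case False
      then obtain e where e: "e \<in> edges G" "e \<subseteq> set L" "e \<notin> walk_edges L" by blast
      obtain x y where "e = {x, y}" "x \<noteq> y"
        using e(1) assms(1) unfolding is_graph_def by blast
      then obtain l1 m l3 x' y' where L: "L = l1 @ x' # m @ y' # l3" and e_eq: "e = {x', y'}"
        using split_list_two[of x L y] e(2) by auto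
      have "m \<noteq> []"
        using e(3) walk_edges_append_Cons[of l1 x' "y' # l3"] unfolding L e_eq by auto
      then show ?thesis
      proof (intro shortcut)
        show "walk_edges (l1 @ x' # y' # l3) \<subseteq> edges G"
          using less.prems(2) e(1) walk_edges_shortcut[of l1 x' y' l3 m] unfolding L e_eq by auto
      qed (auto simp: L hd_append)
    qed
  qed
qed

lemma chords_append_induced_path:
  assumes "R \<noteq> []" "Q \<noteq> []" "set R \<inter> set Q = {}"
    and path: "induced_path G (last R # Q @ [hd R])"
    and no_cross: "\<And>e. e \<in> edges G \<Longrightarrow> e \<subseteq> set R \<union> set Q \<Longrightarrow> e \<inter> set Q \<noteq> {} \<Longrightarrow>
      e \<subseteq> set (last R # Q @ [hd R])"
  shows "chords G (R @ Q) = {e \<in> edges G. e \<subseteq> set R} - walk_edges R"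
proof -
  let ?P = "last R # Q @ [hd R]"
  have cycle: "cycle_edges (R @ Q) = walk_edges R \<union> walk_edges ?P"
    using assms(1,2) by (rule cycle_edges_append)
  have P_meets_Q: "e \<inter> set Q \<noteq> {}" if "e \<in> walk_edges ?P" for e
  proof -
    have "walk_edges ?P = insert {last R, hd Q} (walk_edges Q \<union> {{last Q, hd R}})"
      using assms(2) by (simp add: walk_edges_Cons walk_edges_append)
    with that consider "e = {last R, hd Q}" | "e \<in> walk_edges Q" | "e = {last Q, hd R}"
      by blast
    then show ?thesis
    proof cases
      case 2
      then show ?thesis by (rule walk_edgesE) auto
    qed (use assms(2) in auto)
  qed
  show ?thesis
  proof (intro set_eqI iffI)
    fix e
    assume "e \<in> chords G (R @ Q)"
    then have e: "e \<in> edges G" "e \<subseteq> set R \<union> set Q" "e \<notin> walk_edges R" "e \<notin> walk_edges ?P"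
      unfolding chords_def cycle by auto
    have "e \<inter> set Q = {}"
    proof (rule ccontr)
      assume "e \<inter> set Q \<noteq> {}"
      with e(1,2) have "e \<subseteq> set ?P" by (rule no_cross)
      with path e(1,4) show False unfolding induced_path_def by blast
    qed
    with e(1-3) show "e \<in> {e \<in> edges G. e \<subseteq> set R} - walk_edges R" by blast
  next
    fix e
    assume e: "e \<in> {e \<in> edges G. e \<subseteq> set R} - walk_edges R"
    with P_meets_Q assms(3) have "e \<notin> walk_edges ?P" by blast
    with e show "e \<in> chords G (R @ Q)" unfolding chords_def cycle set_append by blast
  qed
qed

section \<open>Induced subgraphs and heredity\<close>

lemma verts_induced [simp]: "verts (induced G X) = verts G \<inter> X"
  by (simp add: induced_def verts_def)

lemma edges_induced [simp]: "edges (induced G X) = {e \<in> edges G. e \<subseteq> X}"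
  by (simp add: induced_def edges_def)

lemma verts_delete [simp]: "verts (delete G X) = verts G - X"
  by (auto simp: delete_def)

lemma edges_delete [simp]: "edges (delete G X) = {e \<in> edges G. e \<subseteq> verts G - X}"
  by (auto simp: delete_def)

lemma is_graph_induced: "is_graph G \<Longrightarrow> is_graph (induced G X)"
  unfolding is_graph_def by fastforce

lemma is_cycle_chords_transfer:
  assumes "is_cycle K cs" "set cs \<subseteq> verts G"
    and "{e \<in> edges K. e \<subseteq> set cs} = {e \<in> edges G. e \<subseteq> set cs}"
  shows "is_cycle G cs \<and> chords G cs = chords K cs"
  using assms cycle_edges_subset_set unfolding is_cycle_iff chords_def by blast

lemma no_unique_chord_class_induced:
  assumes "no_unique_chord_class G"
  shows "no_unique_chord_class (induced G X)"
proof -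
  have "\<not> has_cycle_unique_chord (induced G X)"
  proof
    assume "has_cycle_unique_chord (induced G X)"
    then obtain cs where cs: "is_cycle (induced G X) cs" "card (chords (induced G X) cs) = 1"
      unfolding has_cycle_unique_chord_def by blast
    have "set cs \<subseteq> verts G \<inter> X" using cs(1) unfolding is_cycle_iff by simp
    then have "is_cycle G cs \<and> chords G cs = chords (induced G X) cs"
      by (intro is_cycle_chords_transfer[OF cs(1)]) auto
    with cs(2) assms show False
      unfolding no_unique_chord_class_def has_cycle_unique_chord_def by metis
  qed
  with assms show ?thesis
    unfolding no_unique_chord_class_def by (simp add: is_graph_induced)
qed

lemma cl_eq_induced: "{u, v} \<in> edges G \<Longrightarrow> cl G u v C = induced G (C \<union> {u, v})"
  by (simp add: cl_def induced_def prod_eq_iff verts_def edges_def insert_absorb)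

section \<open>Connectivity\<close>

lemma reach_sym:
  assumes "reach D x y"
  shows "reach D y x"
proof -
  have "symp (\<lambda>x y. x \<in> verts D \<and> y \<in> verts D \<and> adj D x y)"
    by (rule sympI) (auto simp: adj_def insert_commute)
  from sympD[OF symp_rtranclp[OF this]] assms show ?thesis unfolding reach_def .
qed

lemma reach_trans: "reach D x y \<Longrightarrow> reach D y z \<Longrightarrow> reach D x z"
  unfolding reach_def by (rule rtranclp_trans)

lemma reach_verts: "reach D x y \<Longrightarrow> x \<in> verts D \<Longrightarrow> y \<in> verts D"
  unfolding reach_def by (induction rule: rtranclp_induct) auto

lemma reach_adj_closed:
  assumes "\<And>y z. y \<in> S \<Longrightarrow> z \<in> verts D \<Longrightarrow> adj D y z \<Longrightarrow> z \<in> S"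
    and "reach D x y" "x \<in> S"
  shows "y \<in> S"
  using assms(2,3) unfolding reach_def by (induction rule: rtranclp_induct) (auto intro: assms(1))

lemma reach_walk:
  assumes "reach D p q"
  shows "\<exists>xs. xs \<noteq> [] \<and> hd xs = p \<and> last xs = q \<and> walk_edges xs \<subseteq> edges D \<and>
    (\<forall>y\<in>set xs. reach D p y)"
  using assms[unfolded reach_def]
proof (induction rule: rtranclp_induct)
  case base
  show ?case by (intro exI[of _ "[p]"]) (simp add: reach_def)
next
  case (step y z)
  then obtain xs where xs: "xs \<noteq> []" "hd xs = p" "last xs = y" "walk_edges xs \<subseteq> edges D"
    "\<forall>y\<in>set xs. reach D p y"
    by blast
  have "walk_edges (xs @ [z]) = insert {y, z} (walk_edges xs)"
    using walk_edges_append[of xs "[z]"] xs(1,3) by simp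
  moreover have "reach D p z"
    using step(1,2) unfolding reach_def by (rule rtranclp.rtrancl_into_rtrancl)
  ultimately show ?case
    using xs step(2) unfolding adj_def by (intro exI[of _ "xs @ [z]"]) auto
qed

lemma components_subset: "C \<in> components D \<Longrightarrow> C \<subseteq> verts D"
  unfolding components_def by auto

lemma components_nonempty: "C \<in> components D \<Longrightarrow> C \<noteq> {}"
  unfolding components_def reach_def by auto

lemma components_reach_iff:
  assumes "C \<in> components D" "x \<in> C"
  shows "y \<in> C \<longleftrightarrow> reach D x y"
proof -
  obtain x0 where x0: "x0 \<in> verts D" "C = {y \<in> verts D. reach D x0 y}"
    using assms(1) unfolding components_def by blast
  with assms(2) have "reach D x0 x" by blast
  with x0 show ?thesis
    by (metis (mono_tags, lifting) mem_Collect_eq reach_sym reach_trans reach_verts)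
qed

lemma components_eqI: "C \<in> components D \<Longrightarrow> C' \<in> components D \<Longrightarrow> x \<in> C \<Longrightarrow> x \<in> C' \<Longrightarrow> C = C'"
  using components_reach_iff by blast

lemma components_adj_closed:
  assumes "C \<in> components D" "y \<in> C" "z \<in> verts D" "adj D y z"
  shows "z \<in> C"
proof -
  have "y \<in> verts D" using assms(1,2) components_subset by blast
  with assms(3,4) have "reach D y z" unfolding reach_def by blast
  with assms(1,2) show ?thesis using components_reach_iff by blast
qed

lemma finite_components: "finite (verts D) \<Longrightarrow> finite (components D)"
  by (rule finite_subset[of _ "Pow (verts D)"]) (auto simp: components_def)

lemma no_edge_between_components:
  assumes C: "C \<in> components (delete G X)" and C': "C' \<in> components (delete G X)" "C' \<noteq> C"
    and "x \<in> C" "y \<in> C'"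
  shows "{x, y} \<notin> edges G"
proof
  assume edge: "{x, y} \<in> edges G"
  have "x \<in> verts (delete G X)" "y \<in> verts (delete G X)"
    using assms components_subset by blast+
  moreover have "x \<noteq> y" using assms components_eqI by blast
  ultimately have "adj (delete G X) x y" using edge unfolding adj_def by auto
  with C \<open>x \<in> C\<close> \<open>y \<in> verts (delete G X)\<close> have "y \<in> C" by (rule components_adj_closed)
  with assms show False using components_eqI by blast
qed

lemma other_component_of_2cutset:
  assumes "is_2cutset G u v" "C \<in> components (delete G {u, v})"
  obtains C' where "C' \<in> components (delete G {u, v})" "C' \<noteq> C"
proof -
  have "components (delete G {u, v}) \<noteq> {C}"
    using assms(1) unfolding is_2cutset_def connected_graph_def by auto
  with assms(2) show ?thesis using that by blast
qed

lemma component_has_neighbour: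
  assumes "is_graph G" "connected_graph G" "\<not> has_1cutset G"
    and "u \<in> verts G" "v \<in> verts G" "u \<noteq> v"
    and C: "C \<in> components (delete G {u, v})"
  shows "\<exists>c\<in>C. {u, c} \<in> edges G"
proof (rule ccontr)
  \<comment> \<open>Otherwise the component of G - v containing C misses u, so v is a cut vertex.\<close>
  assume no_nbr: "\<not> (\<exists>c\<in>C. {u, c} \<in> edges G)"
  define H where "H = delete G {v}"
  obtain x where x: "x \<in> C" using components_nonempty[OF C] by blast
  have C_closed: "z \<in> C" if "y \<in> C" "z \<in> verts H" "adj H y z" for y z
  proof -
    have "{y, z} \<in> edges G" using that(3) unfolding H_def adj_def by simp
    with no_nbr that(1) have "z \<noteq> u" by (auto simp: insert_commute)
    with that components_subset[OF C] have "z \<in> verts (delete G {u, v}) \<and> adj (delete G {u, v}) y z"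
      unfolding H_def adj_def by auto
    with C that(1) show "z \<in> C" using components_adj_closed by blast
  qed
  define K where "K = {y \<in> verts H. reach H x y}"
  define K' where "K' = {y \<in> verts H. reach H u y}"
  have "y \<in> C" if "reach H x y" for y
    using C_closed that x by (rule reach_adj_closed)
  then have "K \<subseteq> C" unfolding K_def by blast
  then have "u \<notin> K" using components_subset[OF C] by auto
  moreover have "u \<in> K'" using assms(4,6) unfolding K'_def H_def reach_def by simp
  moreover have "K \<in> components H" "K' \<in> components H"
    using x components_subset[OF C] assms(4,6) unfolding components_def K_def K'_def H_def by auto
  moreover have "finite (components H)"
    using assms(1) unfolding is_graph_def H_def by (simp add: finite_components)
  ultimately have "card {K, K'} \<le> card (components H)" "K \<noteq> K'"
    by (auto intro: card_mono)
  then have "2 \<le> card (components H)" by simp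
  with assms(2,5) have "has_1cutset G" unfolding has_1cutset_def H_def by blast
  with assms(3) show False by blast
qed

lemma induced_path_through_component:
  assumes graph: "is_graph G" and C: "C \<in> components (delete G X)"
    and ab: "a \<in> X" "b \<in> X" "a \<noteq> b" "{a, b} \<notin> edges G"
    and "\<exists>c\<in>C. {a, c} \<in> edges G" "\<exists>c\<in>C. {b, c} \<in> edges G"
  shows "\<exists>Q. Q \<noteq> [] \<and> set Q \<subseteq> C \<and> induced_path G (b # Q @ [a])"
proof -
  obtain ca cb where ca: "ca \<in> C" "{a, ca} \<in> edges G" and cb: "cb \<in> C" "{b, cb} \<in> edges G"
    using assms(7,8) by blast
  have "reach (delete G X) cb ca" using C ca(1) cb(1) components_reach_iff by blast
  then obtain xs where xs: "xs \<noteq> []" "hd xs = cb" "last xs = ca"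
    "walk_edges xs \<subseteq> edges (delete G X)" "\<forall>y\<in>set xs. reach (delete G X) cb y"
    using reach_walk by blast
  have xs_C: "set xs \<subseteq> C" using xs(5) C cb(1) components_reach_iff by blast
  have "walk_edges (b # xs @ [a]) = insert {b, cb} (insert {ca, a} (walk_edges xs))"
    using xs(1-3) by (simp add: walk_edges_Cons walk_edges_append)
  then have "walk_edges (b # xs @ [a]) \<subseteq> edges G"
    using xs(4) ca(2) cb(2) by (auto simp: insert_commute)
  then obtain P where P: "P \<noteq> []" "hd P = b" "last P = a" "set P \<subseteq> insert b (insert a (set xs))"
    "induced_path G P"
    using walk_to_induced_path[OF graph, of "b # xs @ [a]"] by auto
  then obtain P' where P': "P = b # P'" by (cases P) auto
  with P(3) ab(3) have "P' \<noteq> []" by auto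
  define Q where "Q = butlast P'"
  have PQ: "P = b # Q @ [a]"
    using P(3) P' \<open>P' \<noteq> []\<close> unfolding Q_def by (metis append_butlast_last_id last_ConsR)
  have "Q \<noteq> []"
  proof
    assume "Q = []"
    with P(5) PQ have "{b, a} \<in> edges G" unfolding induced_path_def by simp
    with ab(4) show False by (simp add: insert_commute)
  qed
  moreover have "set Q \<subseteq> C"
    using P(4,5) xs_C unfolding PQ induced_path_def by auto
  ultimately show ?thesis using P(5) PQ by blast
qed

section \<open>Cycles of the subdivided closure\<close>

lemma verts_cl_star [simp]: "verts (cl_star G u v C w) = verts G \<inter> (C \<union> {u, v}) \<union> {w}"
  by (simp add: cl_star_def verts_def induced_def)

lemma edges_cl_star [simp]:
  "edges (cl_star G u v C w) = ({e \<in> edges G. e \<subseteq> C \<union> {u, v}} - {{u, v}}) \<union> {{u, w}, {w, v}}"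
  by (simp add: cl_star_def edges_def induced_def)

lemma edges_cl_star_containing_fresh:
  assumes "is_graph G" "w \<notin> verts G" "e \<in> edges (cl_star G u v C w)" "w \<in> e"
  shows "e = {u, w} \<or> e = {w, v}"
  using assms unfolding is_graph_def by auto

lemma edges_cl_star_within:
  assumes "{u, v} \<notin> edges G" "w \<notin> S" "S \<subseteq> C \<union> {u, v}"
  shows "{e \<in> edges (cl_star G u v C w). e \<subseteq> S} = {e \<in> edges G. e \<subseteq> S}"
  using assms by auto

lemma is_graph_cl_star:
  assumes "is_graph G" "u \<in> verts G" "v \<in> verts G" "w \<notin> verts G"
  shows "is_graph (cl_star G u v C w)"
  unfolding is_graph_def
proof (intro conjI ballI)
  show "finite (verts (cl_star G u v C w))" using assms(1) by (simp add: is_graph_def)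
  fix e
  assume "e \<in> edges (cl_star G u v C w)"
  then consider "e \<in> edges G" "e \<subseteq> C \<union> {u, v}" | "e = {u, w}" | "e = {w, v}" by auto
  then show "\<exists>x y. e = {x, y} \<and> x \<noteq> y \<and>
    x \<in> verts (cl_star G u v C w) \<and> y \<in> verts (cl_star G u v C w)"
  proof cases
    case 1
    with assms(1) obtain x y where "e = {x, y}" "x \<noteq> y" "x \<in> verts G" "y \<in> verts G"
      unfolding is_graph_def by blast
    with 1 show ?thesis by auto
  qed (use assms in auto)
qed

lemma induced_path_cl_star_fresh:
  assumes graph: "is_graph G" and "u \<in> verts G" "v \<in> verts G" "w \<notin> verts G"
    and ab: "{a, b} = {u, v}" "a \<noteq> b"
  shows "induced_path (cl_star G u v C w) [b, w, a]"
proof -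
  have uvw: "u \<noteq> w" "v \<noteq> w" using assms(2-4) by auto
  have set_eq: "set [b, w, a] = {u, v, w}" using ab(1) by auto
  have walk_eq: "walk_edges [b, w, a] = {{u, w}, {w, v}}"
    using ab by (auto simp: doubleton_eq_iff insert_commute)
  have "e \<in> {{u, w}, {w, v}}" if e: "e \<in> edges (cl_star G u v C w)" "e \<subseteq> {u, v, w}" for e
  proof (rule ccontr)
    assume "e \<notin> {{u, w}, {w, v}}"
    with e(1) have "e \<in> edges G" "e \<noteq> {u, v}" by auto
    moreover from graph \<open>e \<in> edges G\<close>
    obtain x y where "e = {x, y}" "x \<noteq> y" "x \<in> verts G" "y \<in> verts G"
      unfolding is_graph_def by blast
    ultimately show False using e(2) assms(4) by auto
  qed
  with uvw ab show ?thesis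
    unfolding induced_path_def set_eq walk_eq by (auto simp: doubleton_eq_iff)
qed

lemma cl_star_cycle_avoiding_fresh:
  assumes "{u, v} \<notin> edges G" "w \<notin> set cs" "is_cycle (cl_star G u v C w) cs"
  shows "is_cycle G cs \<and> chords G cs = chords (cl_star G u v C w) cs"
proof (rule is_cycle_chords_transfer[OF assms(3)])
  have "set cs \<subseteq> verts G \<inter> (C \<union> {u, v})" using assms(2,3) unfolding is_cycle_iff by auto
  then show "set cs \<subseteq> verts G"
    and "{e \<in> edges (cl_star G u v C w). e \<subseteq> set cs} = {e \<in> edges G. e \<subseteq> set cs}"
    using assms(1,2) edges_cl_star_within by auto
qed

lemma cl_star_cycle_through_fresh:
  assumes graph: "is_graph G" and uv: "u \<in> verts G" "v \<in> verts G" "{u, v} \<notin> edges G"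
    and fresh: "w \<notin> verts G" and cycle: "is_cycle (cl_star G u v C w) (R @ [w])"
  shows "{hd R, last R} = {u, v}" and "walk_edges R \<subseteq> edges G"
    and "chords (cl_star G u v C w) (R @ [w]) = {e \<in> edges G. e \<subseteq> set R} - walk_edges R"
proof -
  let ?K = "cl_star G u v C w"
  have R: "2 \<le> length R" "distinct R" "w \<notin> set R" "set R \<subseteq> C \<union> {u, v}"
    and cycle_K: "cycle_edges (R @ [w]) \<subseteq> edges ?K"
    using cycle unfolding is_cycle_iff by auto
  then have "R \<noteq> []" by auto
  then have cycle_eq: "cycle_edges (R @ [w]) = walk_edges R \<union> {{last R, w}, {w, hd R}}"
    using cycle_edges_append[of R "[w]"] by simp
  have "last R \<noteq> w" "hd R \<noteq> w" using R(3) \<open>R \<noteq> []\<close> by auto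
  moreover have "{last R, w} \<in> edges ?K" "{w, hd R} \<in> edges ?K"
    using cycle_K unfolding cycle_eq by blast+
  then have "{last R, w} = {u, w} \<or> {last R, w} = {w, v}" "{w, hd R} = {u, w} \<or> {w, hd R} = {w, v}"
    using edges_cl_star_containing_fresh[OF graph fresh] by blast+
  ultimately have "hd R \<in> {u, v}" "last R \<in> {u, v}" by (auto simp: doubleton_eq_iff)
  moreover have "hd R \<noteq> last R" using R(1,2) by (rule hd_neq_last[rotated])
  ultimately show ends: "{hd R, last R} = {u, v}" by auto
  have edges_R: "{e \<in> edges ?K. e \<subseteq> set R} = {e \<in> edges G. e \<subseteq> set R}"
    using uv(3) R(3,4) by (rule edges_cl_star_within)
  have "walk_edges R \<subseteq> edges ?K" using cycle_K unfolding cycle_eq by blast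
  then have "walk_edges R \<subseteq> {e \<in> edges ?K. e \<subseteq> set R}" using walk_edges_subset_set by blast
  with edges_R show "walk_edges R \<subseteq> edges G" by blast
  have "chords ?K (R @ [w]) = {e \<in> edges ?K. e \<subseteq> set R} - walk_edges R"
  proof (rule chords_append_induced_path)
    show "R \<noteq> []" "[w] \<noteq> []" "set R \<inter> set [w] = {}" using \<open>R \<noteq> []\<close> R(3) by simp_all
    show "induced_path ?K (last R # [w] @ [hd R])"
      using induced_path_cl_star_fresh[OF graph uv(1,2) fresh ends \<open>hd R \<noteq> last R\<close>] by simp
    show "e \<subseteq> set (last R # [w] @ [hd R])"
      if "e \<in> edges ?K" "e \<subseteq> set R \<union> set [w]" "e \<inter> set [w] \<noteq> {}" for e
    proof -
      from that(3) have "w \<in> e" by simp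
      with that(1) have "e = {u, w} \<or> e = {w, v}"
        by (rule edges_cl_star_containing_fresh[OF graph fresh])
      with ends show ?thesis by auto
    qed
  qed
  with edges_R show "chords ?K (R @ [w]) = {e \<in> edges G. e \<subseteq> set R} - walk_edges R"
    by simp
qed

lemma cycle_through_other_component:
  assumes graph: "is_graph G" and uv: "{u, v} \<notin> edges G"
    and C: "C \<in> components (delete G {u, v})"
    and C': "C' \<in> components (delete G {u, v})" "C' \<noteq> C"
    and nbrs: "\<exists>c\<in>C'. {u, c} \<in> edges G" "\<exists>c\<in>C'. {v, c} \<in> edges G"
    and R: "2 \<le> length R" "distinct R" "set R \<subseteq> verts G \<inter> (C \<union> {u, v})"
      "walk_edges R \<subseteq> edges G" "{hd R, last R} = {u, v}"
  shows "\<exists>cs. is_cycle G cs \<and> chords G cs = {e \<in> edges G. e \<subseteq> set R} - walk_edges R"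
proof -
  define a b where "a = hd R" and "b = last R"
  have "a \<noteq> b" using R(1,2) unfolding a_def b_def by (rule hd_neq_last[rotated])
  have ab: "a \<in> {u, v}" "b \<in> {u, v}" "{a, b} \<notin> edges G"
    using R(5) uv unfolding a_def b_def by auto
  obtain Q where Q: "Q \<noteq> []" "set Q \<subseteq> C'" "induced_path G (b # Q @ [a])"
    using induced_path_through_component[OF graph C'(1) ab(1,2) \<open>a \<noteq> b\<close> ab(3)] ab(1,2) nbrs
    by blast
  have "C' \<inter> C = {}" using C C' components_eqI by blast
  moreover have "C' \<inter> {u, v} = {}" using components_subset[OF C'(1)] by auto
  ultimately have disjoint: "set R \<inter> set Q = {}" using R(3) Q(2) by blast
  have "R \<noteq> []" using R(1) by auto
  have "chords G (R @ Q) = {e \<in> edges G. e \<subseteq> set R} - walk_edges R"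
  proof (rule chords_append_induced_path)
    show "induced_path G (last R # Q @ [hd R])" using Q(3) unfolding a_def b_def .
    show "e \<subseteq> set (last R # Q @ [hd R])"
      if e: "e \<in> edges G" "e \<subseteq> set R \<union> set Q" "e \<inter> set Q \<noteq> {}" for e
    proof -
      obtain q where q: "q \<in> e" "q \<in> set Q" using e(3) by blast
      obtain x y where "e = {x, y}" using e(1) graph unfolding is_graph_def by blast
      with q(1) obtain z where z: "e = {q, z}" by blast
      have "z \<notin> C"
        using no_edge_between_components[OF C'(1) C C'(2)[symmetric]] q(2) Q(2) e(1) z by blast
      then have "z \<in> set Q \<or> z \<in> {u, v}" using e(2) R(3) z by auto
      then show ?thesis using q(2) z R(5) by auto
    qed
  qed (use \<open>R \<noteq> []\<close> Q(1) disjoint in auto)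
  moreover have "is_cycle G (R @ Q)"
    unfolding is_cycle_iff
  proof (intro conjI)
    show "3 \<le> length (R @ Q)" using R(1) Q(1) by (cases Q) auto
    show "distinct (R @ Q)" using R(2) Q(3) disjoint unfolding induced_path_def by simp
    show "set (R @ Q) \<subseteq> verts G" using R(3) Q(2) components_subset[OF C'(1)] by auto
    show "cycle_edges (R @ Q) \<subseteq> edges G"
      using cycle_edges_append[OF \<open>R \<noteq> []\<close> Q(1)] R(4) Q(3)
      unfolding induced_path_def a_def b_def by auto
  qed
  ultimately show ?thesis by blast
qed

lemma no_unique_chord_class_cl_star:
  assumes in_class: "no_unique_chord_class G"
    and uv: "u \<in> verts G" "v \<in> verts G" "{u, v} \<notin> edges G" and fresh: "w \<notin> verts G"
    and C: "C \<in> components (delete G {u, v})"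
    and C': "C' \<in> components (delete G {u, v})" "C' \<noteq> C"
    and nbrs: "\<exists>c\<in>C'. {u, c} \<in> edges G" "\<exists>c\<in>C'. {v, c} \<in> edges G"
  shows "no_unique_chord_class (cl_star G u v C w)"
proof -
  let ?K = "cl_star G u v C w"
  have graph: "is_graph G" using in_class unfolding no_unique_chord_class_def by blast
  have transfer: "\<exists>cs'. is_cycle G cs' \<and> chords G cs' = chords ?K cs"
    if cycle: "is_cycle ?K cs" for cs
  proof (cases "w \<in> set cs")
    case False
    with uv(3) cycle show ?thesis using cl_star_cycle_avoiding_fresh by blast
  next
    case True
    then obtain xs ys where "cs = xs @ w # ys" by (meson split_list)
    then have rot: "rotate (length (xs @ [w])) cs = (ys @ xs) @ [w]"
      using rotate_append[of "xs @ [w]" ys] by simp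
    define R where "R = ys @ xs"
    have R: "is_cycle ?K (R @ [w])" "chords ?K (R @ [w]) = chords ?K cs"
      using cycle unfolding R_def rot[symmetric] is_cycle_rotate chords_rotate by simp_all
    have "2 \<le> length R" "distinct R" "set R \<subseteq> verts G \<inter> (C \<union> {u, v})"
      using R(1) unfolding is_cycle_iff by auto
    note through = cl_star_cycle_through_fresh[OF graph uv fresh R(1)]
    obtain cs' where "is_cycle G cs'" "chords G cs' = {e \<in> edges G. e \<subseteq> set R} - walk_edges R"
      using cycle_through_other_component[OF graph uv(3) C C' nbrs \<open>2 \<le> length R\<close> \<open>distinct R\<close>
          \<open>set R \<subseteq> _\<close> through(2,1)]
      by blast
    with through(3) R(2) show ?thesis by auto
  qed
  have "\<not> has_cycle_unique_chord ?K"
  proof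
    assume "has_cycle_unique_chord ?K"
    then obtain cs where "is_cycle ?K cs" "card (chords ?K cs) = 1"
      unfolding has_cycle_unique_chord_def by blast
    from transfer[OF this(1)] this(2) obtain cs' where "is_cycle G cs'" "card (chords G cs') = 1"
      by auto
    with in_class show False
      unfolding no_unique_chord_class_def has_cycle_unique_chord_def by blast
  qed
  with graph uv(1,2) fresh show ?thesis
    unfolding no_unique_chord_class_def by (simp add: is_graph_cl_star)
qed

theorem mainTheorem10:
  shows "two_cutset_safe no_unique_chord_class"
  unfolding two_cutset_safe_def hereditary_def
proof (intro conjI allI impI)
  show "no_unique_chord_class (induced G X)" if "no_unique_chord_class G" for G X
    using that by (rule no_unique_chord_class_induced)
next
  fix G u v C
  assume "no_unique_chord_class G \<and> connected_graph G \<and> \<not> has_1cutset G \<and> is_2cutset G u v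
    \<and> C \<in> components (delete G {u, v})"
  then have in_class: "no_unique_chord_class G" and conn: "connected_graph G" "\<not> has_1cutset G"
    and cut: "is_2cutset G u v" and C: "C \<in> components (delete G {u, v})"
    by auto
  have graph: "is_graph G" using in_class unfolding no_unique_chord_class_def by blast
  have uv: "u \<in> verts G" "v \<in> verts G" "u \<noteq> v" using cut unfolding is_2cutset_def by auto
  show "no_unique_chord_class (cl G u v C) \<or>
    (\<exists>w. w \<notin> verts G \<and> no_unique_chord_class (cl_star G u v C w))"
  proof (cases "{u, v} \<in> edges G")
    case True
    then show ?thesis using in_class by (simp add: cl_eq_induced no_unique_chord_class_induced)
  next
    case False
    obtain w where fresh: "w \<notin> verts G"
      using graph infinite_UNIV_nat ex_new_if_finite unfolding is_graph_def by blast
    obtain C' where C': "C' \<in> components (delete G {u, v})" "C' \<noteq> C"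
      using other_component_of_2cutset[OF cut C] .
    have "\<exists>c\<in>C'. {u, c} \<in> edges G"
      using component_has_neighbour[OF graph conn uv C'(1)] .
    moreover have "\<exists>c\<in>C'. {v, c} \<in> edges G"
      using component_has_neighbour[OF graph conn uv(2,1) uv(3)[symmetric]] C'(1)
      by (simp add: insert_commute)
    ultimately show ?thesis
      using no_unique_chord_class_cl_star[OF in_class uv(1,2) False fresh C C'] fresh by blast
  qed
qed

end
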